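(* A $\rho$-shifted weight $\lambda\in X+\rho$ is called atypical if $(\lambda,\beta)=0$ for some $\beta\in\{\delta\pm\epsilon_i:i=1,2,3\}$. For $k\in\mathbb N$ let $\mathrm{WT}_k=\{\sigma(f_{k,n}):\sigma\in W,\ n\in\mathbb N\}$. Then the sets $\mathrm{WT}_k$ ($k\in\mathbb N$) are pairwise disjoint and their union is exactly the set of atypical weights in $X+\rho$; in particular every atypical weight is $W$-conjugate to some $f_{k,n}$.
   Context: $\mathfrak g=G(3)$, the 31-dimensional exceptional simple complex Lie superalgebra with $\mathfrak g_{\bar0}=G_2\oplus\mathfrak{sl}_2$. The dual $\mathfrak h^*$ of its Cartan subalgebra is spanned by $\delta,\epsilon_1,\epsilon_2,\epsilon_3$ subject to $\epsilon_1+\epsilon_2+\epsilon_3=0$, with bilinear form $(\delta,\delta)=-2$, $(\delta,\epsilon_i)=0$, $(\epsilon_i,\epsilon_i)=2$, $(\epsilon_i,\epsilon_j)=-1$ ($i\ne j$). Simple roots $\epsilon_2-\epsilon_1,\ \epsilon_1,\ \delta+\epsilon_3$; positive even roots $2\delta,\epsilon_1,\epsilon_2,-\epsilon_3,\epsilon_2-\epsilon_1,\epsilon_1-\epsilon_3,\epsilon_2-\epsilon_3$; positive odd roots $\delta,\ \delta\pm\epsilon_i$ ($i=1,2,3$). $\rho=-\tfrac52\delta+2\epsilon_1+3\epsilon_2$, and $X=\mathbb Z\delta\oplus\mathbb Z\epsilon_1\oplus\mathbb Z\epsilon_2$ is the integral weight lattice. The Weyl group $W=\langle s_0\rangle\times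 W_2$ acts linearly on $\mathfrak h^*$: $s_0$ sends $\delta\mapsto-\delta$ and fixes the $\epsilon_i$; $W_2$ (Weyl group of $G_2$, dihedral of order 12) fixes $\delta$ and is generated by $s_1$ (swaps $\epsilon_1,\epsilon_2$, fixes $\epsilon_3$) and $s_2$ ($\epsilon_1\mapsto-\epsilon_1$, $\epsilon_2\mapsto-\epsilon_3$, $\epsilon_3\mapsto-\epsilon_2$). For $k,n\in\mathbb N$ the anti-dominant weights $f_{k,n}\in X+\rho$ are: $f_{k,n}=-\tfrac{2n+1}{2}\delta-(n+k+1)\epsilon_1-(2k+1)\epsilon_2$ for $0\le n\le k-1$; $f_{k,k}=-\tfrac{2k+1}{2}\delta-(2k+1)\epsilon_1-(2k+1)\epsilon_2$; $f_{k,n}=-\tfrac{2n+1}{2}\delta-(2k+1)\epsilon_1-(n+k+1)\epsilon_2$ for $k+1\le n\le 3k$; $f_{k,3k+1}=-\tfrac{6k+3}{2}\delta-(2k+1)\epsilon_1-(4k+2)\epsilon_2$; $f_{k,n}=-\tfrac{2n+1}{2}\delta-(n-k)\epsilon_1-(n+k+1)\epsilon_2$ for $n\ge 3k+2$. *)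

theory Defs
  imports Main "HOL.Rat"
begin

text \<open>Weights in h* are written in coordinates (a, b, c) meaning
  a*delta + b*eps1 + c*eps2 (eps3 = -eps1 - eps2).\<close>

type_synonym wt = "rat \<times> rat \<times> rat"

definition delta :: wt where "delta = (1, 0, 0)"
definition eps1 :: wt where "eps1 = (0, 1, 0)"
definition eps2 :: wt where "eps2 = (0, 0, 1)"
definition eps3 :: wt where "eps3 = (0, -1, -1)"

definition wadd :: "wt \<Rightarrow> wt \<Rightarrow> wt" where
  "wadd x y = (case x of (a, b, c) \<Rightarrow> case y of (a', b', c') \<Rightarrow> (a + a', b + b', c + c'))"
definition wneg :: "wt \<Rightarrow> wt" where
  "wneg x = (case x of (a, b, c) \<Rightarrow> (-a, -b, -c))"

text \<open>Bilinear form: (delta,delta) = -2, (delta,eps_i) = 0, (eps_i,eps_i) = 2,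
  (eps_i,eps_j) = -1 for i \<noteq> j.\<close>
definition form :: "wt \<Rightarrow> wt \<Rightarrow> rat" where
  "form x y = (case x of (a, b, c) \<Rightarrow> case y of (a', b', c') \<Rightarrow>
      -2*a*a' + 2*b*b' + 2*c*c' - b*c' - c*b')"

definition rho :: wt where "rho = (-5/2, 2, 3)"

definition Xrho :: "wt set" where
  "Xrho = {wadd (of_int i, of_int j, of_int k) rho | i j k. True}"

text \<open>Generators of the Weyl group, acting linearly.
  s0: delta -> -delta, fixes eps_i.
  s1: swaps eps1, eps2.
  s2: eps1 -> -eps1, eps2 -> -eps3 = eps1 + eps2.\<close>
definition s0 :: "wt \<Rightarrow> wt" where "s0 x = (case x of (a, b, c) \<Rightarrow> (-a, b, c))"
definition s1 :: "wt \<Rightarrow> wt" where "s1 x = (case x of (a, b, c) \<Rightarrow> (a, c, b))"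
definition s2 :: "wt \<Rightarrow> wt" where "s2 x = (case x of (a, b, c) \<Rightarrow> (a, c - b, c))"

text \<open>The Weyl group W = <s0> x W2 = group generated by s0, s1, s2
  (a finite group, so the generated monoid is the generated group).\<close>
inductive_set WeylG :: "(wt \<Rightarrow> wt) set" where
  WeylG_id: "id \<in> WeylG"
| WeylG_s0: "w \<in> WeylG \<Longrightarrow> s0 \<circ> w \<in> WeylG"
| WeylG_s1: "w \<in> WeylG \<Longrightarrow> s1 \<circ> w \<in> WeylG"
| WeylG_s2: "w \<in> WeylG \<Longrightarrow> s2 \<circ> w \<in> WeylG"

definition odd_isotropic :: "wt set" where
  "odd_isotropic = {wadd delta e | e. e \<in> {eps1, eps2, eps3}}
                 \<union> {wadd delta (wneg e) | e. e \<in> {eps1, eps2, eps3}}"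

definition atypical :: "wt \<Rightarrow> bool" where
  "atypical l \<longleftrightarrow> l \<in> Xrho \<and> (\<exists>\<beta>\<in>odd_isotropic. form l \<beta> = 0)"

definition f :: "nat \<Rightarrow> nat \<Rightarrow> wt" where
  "f k n =
    (let a = - (2 * of_nat n + 1) / 2 in
     if n \<le> k - 1 \<and> n < k then (a, - (of_nat n + of_nat k + 1), - (2 * of_nat k + 1))
     else if n = k then (a, - (2 * of_nat k + 1), - (2 * of_nat k + 1))
     else if n \<le> 3 * k then (a, - (2 * of_nat k + 1), - (of_nat n + of_nat k + 1))
     else if n = 3 * k + 1 then (a, - (2 * of_nat k + 1), - (4 * of_nat k + 2))
     else (a, - (of_nat n - of_nat k), - (of_nat n + of_nat k + 1)))"

definition WT :: "nat \<Rightarrow> wt set" where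
  "WT k = {\<sigma> (f k n) | \<sigma> n. \<sigma> \<in> WeylG}"

end

theory Submission
  imports Defs
begin

text \<open>The form is \<open>W\<close>-invariant and takes the value \<open>3/2 (2k+1)\<^sup>2\<close> on every
  \<open>f\<^sub>k\<^sub>,\<^sub>n\<close>, so the orbits \<open>WT\<^sub>k\<close> are pairwise disjoint. Atypicality is
  \<open>W\<close>-invariant, and every weight is \<open>W\<close>-conjugate to one in the antidominant chamber: keep
  reflecting in a simple root that pairs positively with it, which lowers the number of
  positive \<open>G\<^sub>2\<close>-roots pairing positively. In that chamber an atypical weight of
  \<open>X + \<rho>\<close> satisfies one of only three of the six atypicality equations, and each of them
  is solved by \<open>f\<^sub>k\<^sub>,\<^sub>n\<close> for exactly one of the ranges of \<open>n\<close> in its definition.\<close>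

lemma s0_apply [simp]: "s0 (a, b, c) = (-a, b, c)" by (simp add: s0_def)
lemma s1_apply [simp]: "s1 (a, b, c) = (a, c, b)" by (simp add: s1_def)
lemma s2_apply [simp]: "s2 (a, b, c) = (a, c - b, c)" by (simp add: s2_def)

lemma Xrho_iff: "(a, b, c) \<in> Xrho \<longleftrightarrow> a + 1/2 \<in> \<int> \<and> b \<in> \<int> \<and> c \<in> \<int>"
proof
  assume "(a, b, c) \<in> Xrho"
  then obtain i j k :: int where "(a, b, c) = (of_int i - 5/2, of_int j + 2, of_int k + 3)"
    by (auto simp: Xrho_def wadd_def rho_def)
  then have "a + 1/2 = of_int (i - 2)" "b = of_int (j + 2)" "c = of_int (k + 3)" by simp_all
  then show "a + 1/2 \<in> \<int> \<and> b \<in> \<int> \<and> c \<in> \<int>" by (metis Ints_of_int)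
next
  assume "a + 1/2 \<in> \<int> \<and> b \<in> \<int> \<and> c \<in> \<int>"
  then obtain i j k :: int where "a + 1/2 = of_int i" "b = of_int j" "c = of_int k"
    by (auto elim!: Ints_cases)
  then have "(a, b, c) = wadd (of_int (i + 2), of_int (j - 2), of_int (k - 3)) rho"
    by (simp add: wadd_def rho_def)
  then show "(a, b, c) \<in> Xrho" unfolding Xrho_def by blast
qed

lemma odd_isotropic_eq:
  "odd_isotropic = {(1, 1, 0), (1, 0, 1), (1, -1, -1), (1, -1, 0), (1, 0, -1), (1, 1, 1)}"
proof -
  have "odd_isotropic = wadd delta ` {eps1, eps2, eps3} \<union> (\<lambda>e. wadd delta (wneg e)) ` {eps1, eps2, eps3}"
    unfolding odd_isotropic_def by blast
  then show ?thesis by (simp add: wadd_def wneg_def delta_def eps1_def eps2_def eps3_def insert_commute)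
qed

lemma atypical_iff:
  "atypical (a, b, c) \<longleftrightarrow> (a, b, c) \<in> Xrho \<and>
     (2*a = 2*b - c \<or> 2*a = 2*c - b \<or> 2*a = -b - c \<or>
      2*a = c - 2*b \<or> 2*a = b - 2*c \<or> 2*a = b + c)"
  unfolding atypical_def odd_isotropic_eq by (auto simp: form_def algebra_simps)

lemma Xrho_s0: "(-a, b, c) \<in> Xrho \<longleftrightarrow> (a, b, c) \<in> Xrho"
proof -
  have "a + 1/2 \<in> \<int> \<Longrightarrow> -a + 1/2 \<in> \<int>" for a :: rat
    using Ints_diff[OF Ints_1, of "a + 1/2"] by simp
  then have "-a + 1/2 \<in> \<int> \<longleftrightarrow> a + 1/2 \<in> \<int>" by (metis minus_minus)
  then show ?thesis unfolding Xrho_iff by blast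
qed

lemma Xrho_s1: "(a, c, b) \<in> Xrho \<longleftrightarrow> (a, b, c) \<in> Xrho"
  by (auto simp: Xrho_iff)

lemma Xrho_s2: "(a, c - b, c) \<in> Xrho \<longleftrightarrow> (a, b, c) \<in> Xrho"
  using Ints_diff[of c "c - b"] Ints_diff[of c b] by (auto simp: Xrho_iff)

lemma WeylG_invariant:
  assumes "\<And>x. P (s0 x) = P x" "\<And>x. P (s1 x) = P x" "\<And>x. P (s2 x) = P x" "\<sigma> \<in> WeylG"
  shows "P (\<sigma> x) = P x"
  using assms(4) by induct (simp_all add: assms(1-3))

lemma atypical_s0: "atypical (s0 x) \<longleftrightarrow> atypical x"
proof -
  obtain a b c where x: "x = (a, b, c)" by (cases x)
  show ?thesis unfolding x s0_apply atypical_iff Xrho_s0 by (intro conj_cong refl) auto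
qed

lemma atypical_s1: "atypical (s1 x) \<longleftrightarrow> atypical x"
proof -
  obtain a b c where x: "x = (a, b, c)" by (cases x)
  show ?thesis unfolding x s1_apply atypical_iff Xrho_s1 by (intro conj_cong refl) auto
qed

lemma atypical_s2: "atypical (s2 x) \<longleftrightarrow> atypical x"
proof -
  obtain a b c where x: "x = (a, b, c)" by (cases x)
  show ?thesis unfolding x s2_apply atypical_iff Xrho_s2 by (intro conj_cong refl) auto
qed

lemma atypical_WeylG: "\<sigma> \<in> WeylG \<Longrightarrow> atypical (\<sigma> x) \<longleftrightarrow> atypical x"
  by (rule WeylG_invariant) (simp_all only: atypical_s0 atypical_s1 atypical_s2)

lemma form_WeylG: "\<sigma> \<in> WeylG \<Longrightarrow> form (\<sigma> x) (\<sigma> y) = form x y"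
  by (induct rule: WeylG.induct) (auto simp: form_def s0_def s1_def s2_def algebra_simps split: prod.splits)

lemma f_le: "n \<le> k \<Longrightarrow>
    f k n = (- (2 * of_nat n + 1) / 2, - (of_nat n + of_nat k + 1), - (2 * of_nat k + 1))"
  by (cases "n = k") (auto simp: f_def Let_def)

lemma f_mid: "k \<le> n \<Longrightarrow> n \<le> 3 * k + 1 \<Longrightarrow>
    f k n = (- (2 * of_nat n + 1) / 2, - (2 * of_nat k + 1), - (of_nat n + of_nat k + 1))"
  by (auto simp: f_def Let_def)

lemma f_ge: "3 * k + 1 \<le> n \<Longrightarrow>
    f k n = (- (2 * of_nat n + 1) / 2, - (of_nat n - of_nat k), - (of_nat n + of_nat k + 1))"
  by (auto simp: f_def Let_def)

lemma f_ranges: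
  fixes k n :: nat
  obtains "n \<le> k" | "k \<le> n" "n \<le> 3 * k + 1" | "3 * k + 1 \<le> n"
  by linarith

lemma atypical_f: "atypical (f k n)"
proof -
  have "- (2 * of_nat n + 1) / 2 + 1/2 = (of_int (- int n) :: rat)" by (simp add: field_simps)
  then have "- (2 * of_nat n + 1) / 2 + 1/2 \<in> (\<int> :: rat set)" by (metis Ints_of_int)
  then show ?thesis
    by (cases rule: f_ranges[where k=k and n=n])
       (simp_all add: f_le f_mid f_ge atypical_iff Xrho_iff)
qed

lemma form_f_self: "form (f k n) (f k n) = 3/2 * (2 * of_nat k + 1)^2"
  by (cases rule: f_ranges[where k=k and n=n])
     (simp_all add: f_le f_mid f_ge form_def, simp_all add: field_simps power2_eq_square)

text \<open>In terms of the form: \<open>(\<lambda>,\<delta>) \<ge> 0\<close>, \<open>(\<lambda>,\<epsilon>\<^sub>1) \<le> 0\<close> and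
  \<open>(\<lambda>,\<epsilon>\<^sub>2 - \<epsilon>\<^sub>1) \<le> 0\<close>.\<close>
definition antidominant :: "wt \<Rightarrow> bool" where
  "antidominant l \<longleftrightarrow> (case l of (a, b, c) \<Rightarrow> a \<le> 0 \<and> 2 * b \<le> c \<and> c \<le> b)"

text \<open>The listed numbers are the pairings \<open>(\<lambda>,\<alpha>)\<close> with the six positive
  roots \<open>\<alpha>\<close> of \<open>G\<^sub>2\<close>, up to positive factors.\<close>
definition positive_pairings :: "rat \<Rightarrow> rat \<Rightarrow> nat" where
  "positive_pairings b c = length (filter (\<lambda>r. r > 0) [2*b - c, 2*c - b, b + c, c - b, b, c])"

lemma exists_G2_conjugate_chamber:
  "\<exists>\<sigma>\<in>WeylG. \<exists>b' c'. (a, b, c) = \<sigma> (a, b', c') \<and> 2 * b' \<le> c' \<and> c' \<le> b'"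
proof (induction "positive_pairings b c" arbitrary: b c rule: less_induct)
  case less
  consider "b < c" | "c \<le> b" "c < 2 * b" | "c \<le> b" "2 * b \<le> c" by linarith
  then show ?case
  proof cases
    case 1
    then have "positive_pairings c b < positive_pairings b c"
      by (simp add: positive_pairings_def)
    with less obtain \<sigma> b' c' where "\<sigma> \<in> WeylG" "(a, c, b) = \<sigma> (a, b', c')" "2 * b' \<le> c'" "c' \<le> b'"
      by blast
    moreover have "(a, b, c) = s1 (a, c, b)" by simp
    ultimately show ?thesis using WeylG_s1 by (metis comp_apply)
  next
    case 2
    then have "positive_pairings (c - b) c < positive_pairings b c"
      by (simp add: positive_pairings_def)
    with less obtain \<sigma> b' c' where "\<sigma> \<in> WeylG" "(a, c - b, c) = \<sigma> (a, b', c')" "2 * b' \<le> c'" "c' \<le> b'"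
      by blast
    moreover have "(a, b, c) = s2 (a, c - b, c)" by simp
    ultimately show ?thesis using WeylG_s2 by (metis comp_apply)
  next
    case 3
    then show ?thesis by (metis WeylG_id id_apply)
  qed
qed

lemma exists_WeylG_antidominant: "\<exists>\<sigma>\<in>WeylG. \<exists>m. antidominant m \<and> l = \<sigma> m"
proof -
  obtain a b c where l: "l = (a, b, c)" by (cases l)
  define a' where "a' = - \<bar>a\<bar>"
  obtain \<sigma> b' c' where \<sigma>: "\<sigma> \<in> WeylG" "(a', b, c) = \<sigma> (a', b', c')" "2 * b' \<le> c'" "c' \<le> b'"
    using exists_G2_conjugate_chamber by blast
  have "antidominant (a', b', c')" using \<sigma>(3,4) by (simp add: antidominant_def a'_def)
  show ?thesis
  proof (cases "a \<le> 0")
    case True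
    then show ?thesis using \<sigma> \<open>antidominant (a', b', c')\<close> by (auto simp: l a'_def)
  next
    case False
    then have "l = s0 (a', b, c)" by (simp add: l a'_def)
    then have "l = (s0 \<circ> \<sigma>) (a', b', c')" by (simp add: \<sigma>(2))
    then show ?thesis using \<sigma>(1) WeylG_s0 \<open>antidominant (a', b', c')\<close> by blast
  qed
qed

lemma antidominant_integral_eq_f:
  fixes n :: nat and J K :: int
  assumes "2 * J \<le> K" "K \<le> J"
    and "2 * J - K = - (2 * int n + 1) \<or> 2 * K - J = - (2 * int n + 1) \<or> J + K = - (2 * int n + 1)"
  shows "\<exists>k. f k n = (- (2 * of_nat n + 1) / 2, of_int J, of_int K)"
  using assms(3)
proof (elim disjE)
  assume "2 * J - K = - (2 * int n + 1)"
  moreover define k where "k = nat (- J - int n - 1)"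
  ultimately have "J = - int n - int k - 1" "K = - 2 * int k - 1" "n \<le> k"
    using assms(1,2) by linarith+
  then show ?thesis by (intro exI[of _ k]) (simp add: f_le)
next
  assume "2 * K - J = - (2 * int n + 1)"
  moreover define k where "k = nat (- K - int n - 1)"
  ultimately have "J = - 2 * int k - 1" "K = - int n - int k - 1" "k \<le> n" "n \<le> 3 * k + 1"
    using assms(1,2) by linarith+
  then show ?thesis by (intro exI[of _ k]) (simp add: f_mid)
next
  assume "J + K = - (2 * int n + 1)"
  moreover define k where "k = nat (- K - int n - 1)"
  ultimately have "J = int k - int n" "K = - int n - int k - 1" "3 * k + 1 \<le> n"
    using assms(1,2) by linarith+
  then show ?thesis by (intro exI[of _ k]) (simp add: f_ge)
qed

lemma antidominant_atypical_eq_f: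
  assumes "antidominant m" "atypical m"
  shows "\<exists>k n. m = f k n"
proof -
  obtain a b c where m: "m = (a, b, c)" by (cases m)
  from assms(2) obtain I J K :: int where IJK: "a + 1/2 = of_int I" "b = of_int J" "c = of_int K"
    by (auto simp: m atypical_iff Xrho_iff elim!: Ints_cases)
  from assms(1) have "a \<le> 0" "2 * J \<le> K" "K \<le> J"
    by (simp_all add: m antidominant_def IJK(2,3) flip: of_int_le_iff)
  define n where "n = nat (- I)"
  have "of_int I < (1::rat)" using IJK(1) \<open>a \<le> 0\<close> by linarith
  then have "I = - int n" unfolding n_def by simp
  then have a: "a = - (2 * of_nat n + 1) / 2" using IJK(1) by (simp add: field_simps)
  then have a2: "2 * a = - (2 * of_nat n + 1)" by simp
  from assms(2) have "2*a = 2*b - c \<or> 2*a = 2*c - b \<or> 2*a = -b - c \<or>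
      2*a = c - 2*b \<or> 2*a = b - 2*c \<or> 2*a = b + c"
    by (simp add: m atypical_iff)
  \<comment> \<open>in the chamber \<open>b, c \<le> 0\<close>, so the other three right-hand sides are \<open>\<ge> 0 > 2a\<close>\<close>
  then have "2*b - c = 2*a \<or> 2*c - b = 2*a \<or> b + c = 2*a"
    using assms(1) a unfolding m antidominant_def by auto
  moreover have "2*b - c = 2*a \<longleftrightarrow> 2 * J - K = - (2 * int n + 1)" unfolding a2 IJK(2,3) by linarith
  moreover have "2*c - b = 2*a \<longleftrightarrow> 2 * K - J = - (2 * int n + 1)" unfolding a2 IJK(2,3) by linarith
  moreover have "b + c = 2*a \<longleftrightarrow> J + K = - (2 * int n + 1)" unfolding a2 IJK(2,3) by linarith
  ultimately obtain k where "f k n = (- (2 * of_nat n + 1) / 2, of_int J, of_int K)"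
    using antidominant_integral_eq_f \<open>2 * J \<le> K\<close> \<open>K \<le> J\<close> by presburger
  moreover have "m = (- (2 * of_nat n + 1) / 2, of_int J, of_int K)" by (simp add: m a IJK(2,3))
  ultimately show ?thesis by metis
qed

lemma form_self_WT: "x \<in> WT k \<Longrightarrow> form x x = 3/2 * (2 * of_nat k + 1)^2"
  unfolding WT_def by (auto simp: form_WeylG form_f_self)

lemma WT_disjoint:
  assumes "k \<noteq> k'"
  shows "WT k \<inter> WT k' = {}"
proof -
  have "3/2 * (2 * of_nat k + 1)^2 \<noteq> (3/2 * (2 * of_nat k' + 1)^2 :: rat)"
    using assms by (simp add: power2_eq_iff_nonneg)
  then show ?thesis using form_self_WT by (metis disjoint_iff)
qed

lemma atypical_WeylG_conjugate_f:
  assumes "atypical l"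
  shows "\<exists>\<sigma>\<in>WeylG. \<exists>k n. l = \<sigma> (f k n)"
proof -
  obtain \<sigma> m where "\<sigma> \<in> WeylG" "antidominant m" "l = \<sigma> m"
    using exists_WeylG_antidominant by blast
  with assms show ?thesis
    using antidominant_atypical_eq_f atypical_WeylG by blast
qed

lemma WT_atypical: "x \<in> WT k \<Longrightarrow> atypical x"
  unfolding WT_def by (clarsimp simp: atypical_WeylG atypical_f)

theorem lemma3p3:
  shows "(\<forall>k l. k \<noteq> l \<longrightarrow> WT k \<inter> WT l = {})
       \<and> (\<Union>k. WT k) = {l. atypical l}
       \<and> (\<forall>l. atypical l \<longrightarrow> (\<exists>\<sigma>\<in>WeylG. \<exists>k n. l = \<sigma> (f k n)))"
proof (intro conjI allI impI)
  show "WT k \<inter> WT l = {}" if "k \<noteq> l" for k l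
    using that by (rule WT_disjoint)
  show "(\<Union>k. WT k) = {l. atypical l}"
  proof (intro equalityI subsetI)
    show "x \<in> {l. atypical l}" if "x \<in> (\<Union>k. WT k)" for x
      using that WT_atypical by blast
    show "x \<in> (\<Union>k. WT k)" if "x \<in> {l. atypical l}" for x
      using that atypical_WeylG_conjugate_f unfolding WT_def by blast
  qed
  show "\<exists>\<sigma>\<in>WeylG. \<exists>k n. l = \<sigma> (f k n)" if "atypical l" for l
    using that by (rule atypical_WeylG_conjugate_f)
qed

end
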